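(* For any constants $\alpha\ge 1$ and $\beta\ge 1$, there exist a number of processors $p$ and an in-tree task graph $T$ in the Pebble Game model such that no schedule $S$ of $T$ on $p$ processors satisfies both $C_{\max}(S)\le \alpha\, C^*_p(T)$ and $M(S)\le \beta\, M^*_p(T)$. Equivalently, no algorithm is simultaneously an $\alpha$-approximation for makespan minimization and a $\beta$-approximation for peak memory minimization when scheduling in-trees in the Pebble Game model.
   Context: Model. An in-tree task graph $T$ has nodes $\{1,\dots,n\}$ and a root; every non-root node $i$ has a parent, and $\mathrm{Children}(i)$ is the set of children of $i$. Each node $i$ has a processing time $w_i\ge 0$, an execution-file size $n_i\ge 0$ and an output-file size $f_i\ge 0$. A schedule on $p$ identical processors assigns each node $i$ a processor and a start time $\sigma_i\ge 0$; node $i$ runs without preemption during $[\sigma_i,\sigma_i+w_i)$, a processor runs at most one node at a time, and a node may start only after all its children have completed. The makespan is $C_{\max}=\max_i(\sigma_i+w_i)$. Memory: the output file of $i$ (size $f_i$) occupies memory from the start of $i$ until the completion of the parent of $i$ (for the root, until the end of the schedule), and the execution file of $i$ occupies memory while $i$ runs. The memory used at time $t$ is the total size of files present at time $t$; the peak memory $M(S)$ is the supremum over $t$ of the memory used. $C^*_p(T)$ denotes the minimum makespan and $M^*_p(T)$ the minimum peak memory over all schedules of $T$ on $p$ processors. The Pebble Game model is the special case $f_i=1$, $w_i=1$, $n_i=0$ for all $i$. An algorithm is an $\alpha$-approximation for makespan (resp. $\beta$-approximation for peak memory) if on every instance $(T,p)$ its schedule has makespan at most $\alpha C^*_p(T)$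 (resp. peak memory at most $\beta M^*_p(T)$). *)

theory Defs
  imports Complex_Main
begin

definition in_tree :: "nat \<Rightarrow> nat \<Rightarrow> (nat \<Rightarrow> nat) \<Rightarrow> bool" where
  "in_tree n r par \<longleftrightarrow> r \<in> {1..n} \<and>
     (\<forall>i\<in>{1..n}. i \<noteq> r \<longrightarrow> par i \<in> {1..n}) \<and>
     (\<forall>i\<in>{1..n}. \<exists>k. (par ^^ k) i = r)"

definition children :: "nat \<Rightarrow> nat \<Rightarrow> (nat \<Rightarrow> nat) \<Rightarrow> nat \<Rightarrow> nat set" where
  "children n r par i = {j \<in> {1..n}. j \<noteq> r \<and> par j = i}"

definition valid_schedule ::
  "nat \<Rightarrow> nat \<Rightarrow> (nat \<Rightarrow> nat) \<Rightarrow> (nat \<Rightarrow> real) \<Rightarrow> nat \<Rightarrow> (nat \<Rightarrow> nat) \<Rightarrow> (nat \<Rightarrow> real) \<Rightarrow> bool"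
  where
  "valid_schedule n r par w p proc \<sigma> \<longleftrightarrow>
     (\<forall>i\<in>{1..n}. proc i < p \<and> \<sigma> i \<ge> 0) \<and>
     (\<forall>i\<in>{1..n}. \<forall>j\<in>{1..n}. i \<noteq> j \<and> proc i = proc j \<longrightarrow>
        {\<sigma> i..<\<sigma> i + w i} \<inter> {\<sigma> j..<\<sigma> j + w j} = {}) \<and>
     (\<forall>i\<in>{1..n}. \<forall>j\<in>children n r par i. \<sigma> j + w j \<le> \<sigma> i)"

definition makespan :: "nat \<Rightarrow> (nat \<Rightarrow> real) \<Rightarrow> (nat \<Rightarrow> real) \<Rightarrow> real" where
  "makespan n w \<sigma> = Max ((\<lambda>i. \<sigma> i + w i) ` {1..n})"

text \<open>Memory used at time t: output file of i present from start of i until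
  completion of its parent (for the root: until the end of the schedule);
  execution file of i present while i runs.\<close>
definition mem_at ::
  "nat \<Rightarrow> nat \<Rightarrow> (nat \<Rightarrow> nat) \<Rightarrow> (nat \<Rightarrow> real) \<Rightarrow> (nat \<Rightarrow> real) \<Rightarrow> (nat \<Rightarrow> real)
   \<Rightarrow> (nat \<Rightarrow> real) \<Rightarrow> real \<Rightarrow> real" where
  "mem_at n r par w ne f \<sigma> t =
     (\<Sum>i\<in>{1..n}.
        (if \<sigma> i \<le> t \<and> t < (if i = r then makespan n w \<sigma> else \<sigma> (par i) + w (par i))
         then f i else 0)
      + (if \<sigma> i \<le> t \<and> t < \<sigma> i + w i then ne i else 0))"

definition peak_memory ::
  "nat \<Rightarrow> nat \<Rightarrow> (nat \<Rightarrow> nat) \<Rightarrow> (nat \<Rightarrow> real) \<Rightarrow> (nat \<Rightarrow> real) \<Rightarrow> (nat \<Rightarrow> real)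
   \<Rightarrow> (nat \<Rightarrow> real) \<Rightarrow> real" where
  "peak_memory n r par w ne f \<sigma> = (SUP t. mem_at n r par w ne f \<sigma> t)"

definition opt_makespan ::
  "nat \<Rightarrow> nat \<Rightarrow> (nat \<Rightarrow> nat) \<Rightarrow> (nat \<Rightarrow> real) \<Rightarrow> nat \<Rightarrow> real" where
  "opt_makespan n r par w p =
     Inf {makespan n w \<sigma> | proc \<sigma>. valid_schedule n r par w p proc \<sigma>}"

definition opt_memory ::
  "nat \<Rightarrow> nat \<Rightarrow> (nat \<Rightarrow> nat) \<Rightarrow> (nat \<Rightarrow> real) \<Rightarrow> (nat \<Rightarrow> real) \<Rightarrow> (nat \<Rightarrow> real)
   \<Rightarrow> nat \<Rightarrow> real" where
  "opt_memory n r par w ne f p =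
     Inf {peak_memory n r par w ne f \<sigma> | proc \<sigma>. valid_schedule n r par w p proc \<sigma>}"

definition pg_w :: "nat \<Rightarrow> real" where "pg_w = (\<lambda>_. 1)"
definition pg_f :: "nat \<Rightarrow> real" where "pg_f = (\<lambda>_. 1)"
definition pg_ne :: "nat \<Rightarrow> real" where "pg_ne = (\<lambda>_. 0)"

end

theory Submission
  imports Defs
begin

(* In the Pebble Game model every file has size 1 and lives for at
   least one time unit, so a schedule of makespan C and peak memory P handles at
   most about (C + 1) * P nodes: rounding start times up to integers gives at most
   ceil C time points, each witnessing at most P live files.  Hence n <= (C+1) P
   for every schedule of an n-node in-tree ("area lower bound").
   The hard instance is a comb on m processors: a spine of m nodes, each carrying
   a chain of m further nodes, m (m+1) nodes in total.  It has a parallel schedule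
   of makespan 2m (each processor works on one tooth, then the spine is climbed)
   and a sequential schedule of peak memory 3.  A schedule within factor alpha of
   the optimal makespan and factor beta of the optimal memory would therefore give
   m (m+1) <= (2 alpha m + 1) * 3 beta, which fails for m large. *)

lemma mem_at_pebble:
  "mem_at n r par pg_w pg_ne pg_f \<sigma> t =
   real (card {i\<in>{1..n}. \<sigma> i \<le> t \<and> t < (if i = r then makespan n pg_w \<sigma> else \<sigma> (par i) + 1)})"
  unfolding mem_at_def pg_w_def pg_ne_def pg_f_def
  by (simp add: sum.If_cases) (rule arg_cong[where f=card], auto)

lemma mem_at_pebble_le_size: "mem_at n r par pg_w pg_ne pg_f \<sigma> t \<le> real n"
proof -
  have "card {i\<in>{1..n}. \<sigma> i \<le> t \<and> t < (if i = r then makespan n pg_w \<sigma> else \<sigma> (par i) + 1)}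
        \<le> card {1..n}"
    by (rule card_mono) auto
  then show ?thesis by (simp add: mem_at_pebble)
qed

(* The supremum defining the peak memory is bounded, so it dominates every instant. *)
lemma mem_at_le_peak_memory:
  "mem_at n r par pg_w pg_ne pg_f \<sigma> t \<le> peak_memory n r par pg_w pg_ne pg_f \<sigma>"
  unfolding peak_memory_def
  by (rule cSUP_upper) (auto intro!: bdd_aboveI2[where M="real n"] mem_at_pebble_le_size)

lemma peak_memory_nonneg: "0 \<le> peak_memory n r par pg_w pg_ne pg_f \<sigma>"
  using mem_at_le_peak_memory[of n r par \<sigma> 0] by (simp add: mem_at_pebble)

lemma completion_le_makespan:
  assumes "i \<in> {1..n}"
  shows "\<sigma> i + w i \<le> makespan n w \<sigma>"
  unfolding makespan_def using assms by (intro Max_ge) auto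

lemma makespan_nonneg:
  assumes "valid_schedule n r par pg_w p proc \<sigma>" and "n \<ge> 1"
  shows "0 \<le> makespan n pg_w \<sigma>"
proof -
  have "0 \<le> \<sigma> 1" using assms unfolding valid_schedule_def by auto
  moreover have "\<sigma> 1 + pg_w 1 \<le> makespan n pg_w \<sigma>"
    using assms(2) by (intro completion_le_makespan) auto
  ultimately show ?thesis by (simp add: pg_w_def)
qed

(* The optima are infima of sets bounded below by 0, so any schedule bounds them. *)
lemma opt_makespan_le:
  assumes "valid_schedule n r par pg_w p proc \<sigma>" and "n \<ge> 1"
  shows "opt_makespan n r par pg_w p \<le> makespan n pg_w \<sigma>"
  unfolding opt_makespan_def
proof (rule cInf_lower)
  show "makespan n pg_w \<sigma> \<in> {makespan n pg_w \<sigma> | proc \<sigma>. valid_schedule n r par pg_w p proc \<sigma>}"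
    using assms(1) by blast
  show "bdd_below {makespan n pg_w \<sigma> | proc \<sigma>. valid_schedule n r par pg_w p proc \<sigma>}"
    using makespan_nonneg assms(2) by (intro bdd_belowI[where m=0]) blast
qed

lemma opt_memory_le:
  assumes "valid_schedule n r par pg_w p proc \<sigma>"
  shows "opt_memory n r par pg_w pg_ne pg_f p \<le> peak_memory n r par pg_w pg_ne pg_f \<sigma>"
  unfolding opt_memory_def
proof (rule cInf_lower)
  show "peak_memory n r par pg_w pg_ne pg_f \<sigma>
        \<in> {peak_memory n r par pg_w pg_ne pg_f \<sigma> | proc \<sigma>. valid_schedule n r par pg_w p proc \<sigma>}"
    using assms by blast
  show "bdd_below {peak_memory n r par pg_w pg_ne pg_f \<sigma> | proc \<sigma>. valid_schedule n r par pg_w p proc \<sigma>}"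
    using peak_memory_nonneg by (intro bdd_belowI[where m=0]) blast
qed

section \<open>The area lower bound\<close>

(* Every output file lives for at least one time unit: the parent starts only after
   the node has finished, and the root's file lives until the end of the schedule. *)
lemma file_lives_one_unit:
  assumes tree: "in_tree n r par" and valid: "valid_schedule n r par pg_w p proc \<sigma>"
    and i: "i \<in> {1..n}"
  shows "\<sigma> i + 1 \<le> (if i = r then makespan n pg_w \<sigma> else \<sigma> (par i) + 1)"
proof (cases "i = r")
  case True
  then show ?thesis using completion_le_makespan[OF i, of \<sigma> pg_w] by (simp add: pg_w_def)
next
  case False
  then have "par i \<in> {1..n}" and "i \<in> children n r par (par i)"
    using tree i unfolding in_tree_def children_def by auto
  then have "\<sigma> i + 1 \<le> \<sigma> (par i)"
    using valid unfolding valid_schedule_def pg_w_def by blast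
  then show ?thesis using False by simp
qed

(* A schedule of makespan C and peak memory P handles at most (C + 1) * P nodes:
   node i is live at the integer time slot ceil (sigma i), there are at most ceil C
   slots, and each slot sees at most P live files. *)
theorem area_lower_bound:
  assumes tree: "in_tree n r par" and valid: "valid_schedule n r par pg_w p proc \<sigma>"
  shows "real n \<le> (makespan n pg_w \<sigma> + 1) * peak_memory n r par pg_w pg_ne pg_f \<sigma>"
proof -
  define C where "C = makespan n pg_w \<sigma>"
  define P where "P = peak_memory n r par pg_w pg_ne pg_f \<sigma>"
  define slot where "slot i = nat \<lceil>\<sigma> i\<rceil>" for i
  define live where "live t = {i\<in>{1..n}. \<sigma> i \<le> t \<and> t < (if i = r then C else \<sigma> (par i) + 1)}"
    for t
  have n_pos: "n \<ge> 1" using tree unfolding in_tree_def by auto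
  have start_nonneg: "\<And>i. i \<in> {1..n} \<Longrightarrow> 0 \<le> \<sigma> i"
    using valid unfolding valid_schedule_def by auto
  have lives: "\<And>i. i \<in> {1..n} \<Longrightarrow> \<sigma> i + 1 \<le> (if i = r then C else \<sigma> (par i) + 1)"
    unfolding C_def using file_lives_one_unit[OF tree valid] .
  have slot_live: "i \<in> live (real (slot i))" if i: "i \<in> {1..n}" for i
  proof -
    have "real (slot i) = of_int \<lceil>\<sigma> i\<rceil>" unfolding slot_def using start_nonneg[OF i] by simp
    then show ?thesis
      using lives[OF i] ceiling_correct[of "\<sigma> i"] i unfolding live_def by auto
  qed
  have slots: "slot ` {1..n} \<subseteq> {..<nat \<lceil>C\<rceil>}"
  proof (rule image_subsetI)
    fix i assume i: "i \<in> {1..n}"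
    have "\<sigma> i + 1 \<le> C"
      unfolding C_def using completion_le_makespan[OF i, of \<sigma> pg_w] by (simp add: pg_w_def)
    moreover from this have "\<lceil>\<sigma> i\<rceil> < \<lceil>C\<rceil>" using ceiling_mono[of "\<sigma> i" "C - 1"] by simp
    ultimately show "slot i \<in> {..<nat \<lceil>C\<rceil>}" using start_nonneg[OF i] unfolding slot_def by simp
  qed
  have slot_count: "real (card {i\<in>{1..n}. slot i = k}) \<le> P" for k
  proof -
    have "{i\<in>{1..n}. slot i = k} \<subseteq> live (real k)" using slot_live by blast
    then have "real (card {i\<in>{1..n}. slot i = k}) \<le> real (card (live (real k)))"
      by (intro of_nat_mono card_mono) (auto simp: live_def)
    also have "\<dots> = mem_at n r par pg_w pg_ne pg_f \<sigma> (real k)"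
      by (simp add: mem_at_pebble live_def C_def)
    also have "\<dots> \<le> P" unfolding P_def by (rule mem_at_le_peak_memory)
    finally show ?thesis .
  qed
  have C_nonneg: "0 \<le> C" unfolding C_def using makespan_nonneg[OF valid n_pos] .
  have "real n = (\<Sum>k<nat \<lceil>C\<rceil>. real (card {i\<in>{1..n}. slot i = k}))"
    using sum.group[of "{1..n}" "{..<nat \<lceil>C\<rceil>}" slot "\<lambda>_. 1::real"] slots by simp
  also have "\<dots> \<le> real (nat \<lceil>C\<rceil>) * P"
    using sum_mono[of "{..<nat \<lceil>C\<rceil>}", OF slot_count] by simp
  also have "\<dots> \<le> (C + 1) * P"
    using C_nonneg ceiling_correct[of C] peak_memory_nonneg unfolding P_def
    by (intro mult_right_mono) auto
  finally show ?thesis unfolding C_def P_def .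
qed

(* Incompatibility criterion: if some schedule is fast and some (other) schedule is
   lean, but even alpha times the fast makespan (plus one) times beta times the lean
   memory stays below the number of nodes, then by the area lower bound no single
   schedule is both alpha-optimal for makespan and beta-optimal for memory. *)
theorem no_simultaneous_approximation:
  assumes tree: "in_tree n r par" and "0 \<le> \<alpha>" and "0 \<le> \<beta>"
    and fast: "valid_schedule n r par pg_w p proc\<^sub>1 \<sigma>\<^sub>1"
    and lean: "valid_schedule n r par pg_w p proc\<^sub>2 \<sigma>\<^sub>2"
    and gap: "(\<alpha> * makespan n pg_w \<sigma>\<^sub>1 + 1) * (\<beta> * peak_memory n r par pg_w pg_ne pg_f \<sigma>\<^sub>2) < real n"
  shows "\<not> (\<exists>proc \<sigma>. valid_schedule n r par pg_w p proc \<sigma> \<and>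
          makespan n pg_w \<sigma> \<le> \<alpha> * opt_makespan n r par pg_w p \<and>
          peak_memory n r par pg_w pg_ne pg_f \<sigma> \<le> \<beta> * opt_memory n r par pg_w pg_ne pg_f p)"
proof
  assume "\<exists>proc \<sigma>. valid_schedule n r par pg_w p proc \<sigma> \<and>
          makespan n pg_w \<sigma> \<le> \<alpha> * opt_makespan n r par pg_w p \<and>
          peak_memory n r par pg_w pg_ne pg_f \<sigma> \<le> \<beta> * opt_memory n r par pg_w pg_ne pg_f p"
  then obtain proc \<sigma> where valid: "valid_schedule n r par pg_w p proc \<sigma>"
    and C_approx: "makespan n pg_w \<sigma> \<le> \<alpha> * opt_makespan n r par pg_w p"
    and P_approx: "peak_memory n r par pg_w pg_ne pg_f \<sigma> \<le> \<beta> * opt_memory n r par pg_w pg_ne pg_f p"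
    by blast
  have n_pos: "n \<ge> 1" using tree unfolding in_tree_def by auto
  have "makespan n pg_w \<sigma> \<le> \<alpha> * makespan n pg_w \<sigma>\<^sub>1"
    using C_approx mult_left_mono[OF opt_makespan_le[OF fast n_pos] \<open>0 \<le> \<alpha>\<close>] by linarith
  moreover have "peak_memory n r par pg_w pg_ne pg_f \<sigma> \<le> \<beta> * peak_memory n r par pg_w pg_ne pg_f \<sigma>\<^sub>2"
    using P_approx mult_left_mono[OF opt_memory_le[OF lean] \<open>0 \<le> \<beta>\<close>] by linarith
  ultimately have "(makespan n pg_w \<sigma> + 1) * peak_memory n r par pg_w pg_ne pg_f \<sigma>
      \<le> (\<alpha> * makespan n pg_w \<sigma>\<^sub>1 + 1) * (\<beta> * peak_memory n r par pg_w pg_ne pg_f \<sigma>\<^sub>2)"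
    using makespan_nonneg[OF valid n_pos] peak_memory_nonneg by (intro mult_mono) auto
  then show False using area_lower_bound[OF tree valid] gap by linarith
qed

lemma valid_unit_schedule:
  fixes s :: "nat \<Rightarrow> nat"
  assumes procs: "\<And>i. i \<in> {1..n} \<Longrightarrow> proc i < p"
    and exclusive: "\<And>i j. i \<in> {1..n} \<Longrightarrow> j \<in> {1..n} \<Longrightarrow> i \<noteq> j \<Longrightarrow> proc i = proc j \<Longrightarrow> s i \<noteq> s j"
    and precedence: "\<And>i j. i \<in> {1..n} \<Longrightarrow> j \<in> children n r par i \<Longrightarrow> s j < s i"
  shows "valid_schedule n r par pg_w p proc (\<lambda>i. real (s i))"
proof -
  have "{real (s i)..<real (s i) + 1} \<inter> {real (s j)..<real (s j) + 1} = {}"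
    if "i \<in> {1..n}" "j \<in> {1..n}" "i \<noteq> j" "proc i = proc j" for i j
  proof -
    have "s i \<noteq> s j" using exclusive that .
    then show ?thesis by auto
  qed
  moreover have "real (s j) + 1 \<le> real (s i)" if "i \<in> {1..n}" "j \<in> children n r par i" for i j
    using precedence[OF that] by linarith
  ultimately show ?thesis
    unfolding valid_schedule_def pg_w_def using procs by auto
qed

section \<open>The sequential schedule of a topologically numbered in-tree\<close>

lemma sequential_schedule_valid:
  assumes topo: "\<And>i. i \<in> {1..n} \<Longrightarrow> i \<noteq> r \<Longrightarrow> i < par i" and "p \<ge> 1"
  shows "valid_schedule n r par pg_w p (\<lambda>_. 0) (\<lambda>i. real (i - 1))"
proof (rule valid_unit_schedule)
  fix i j assume "i \<in> {1..n}" "j \<in> children n r par i"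
  then have "j \<ge> 1" "j < i" using topo unfolding children_def by auto
  then show "j - 1 < i - 1" by simp
qed (use \<open>p \<ge> 1\<close> in auto)

(* At time t the live files of the sequential schedule are those of the nodes i
   with i <= floor t + 1 <= par i, i.e. of the tree edges crossing that position. *)
lemma sequential_schedule_memory:
  assumes topo: "\<And>i. i \<in> {1..n} \<Longrightarrow> i \<noteq> r \<Longrightarrow> i < par i" and "t \<ge> 0"
  shows "mem_at n r par pg_w pg_ne pg_f (\<lambda>i. real (i - 1)) t
    \<le> real (card {i\<in>{1..n}. i \<le> nat \<lfloor>t\<rfloor> + 1 \<and> nat \<lfloor>t\<rfloor> + 1 \<le> (if i = r then n else par i)})"
proof -
  let ?k = "nat \<lfloor>t\<rfloor> + 1"
  have makespan_le: "makespan n pg_w (\<lambda>i. real (i - 1)) \<le> real n" if "n \<ge> 1"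
    unfolding makespan_def pg_w_def using that by (intro Max.boundedI) auto
  have below_floor: "a \<le> nat \<lfloor>t\<rfloor>" if "real a \<le> t" for a :: nat
    using that \<open>t \<ge> 0\<close> le_floor_iff[of "int a" t] by linarith
  have above_floor: "nat \<lfloor>t\<rfloor> < a" if "t < real a" for a :: nat
    using that \<open>t \<ge> 0\<close> floor_less_iff[of t "int a"] by linarith
  have "{i\<in>{1..n}. real (i - 1) \<le> t \<and>
          t < (if i = r then makespan n pg_w (\<lambda>i. real (i - 1)) else real (par i - 1) + 1)}
        \<subseteq> {i\<in>{1..n}. i \<le> ?k \<and> ?k \<le> (if i = r then n else par i)}"
  proof safe
    fix i assume i: "i \<in> {1..n}" and start: "real (i - 1) \<le> t"
      and finish: "t < (if i = r then makespan n pg_w (\<lambda>i. real (i - 1)) else real (par i - 1) + 1)"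
    show "i \<le> ?k" using below_floor[OF start] by simp
    have "t < real (if i = r then n else par i)"
      using finish makespan_le topo[OF i] i by (auto simp: of_nat_diff split: if_splits)
    then show "?k \<le> (if i = r then n else par i)" using above_floor Suc_le_eq by simp
  qed
  then show ?thesis
    unfolding mem_at_pebble by (simp add: card_mono)
qed

section \<open>The comb\<close>

(* The comb with m teeth has nodes 1..m(m+1), split into m blocks of m+1 consecutive
   nodes.  Inside a block the nodes form a chain (a tooth) ending in its last node,
   a multiple of m+1; these multiples form the spine, whose top m(m+1) is the root. *)
definition comb_par :: "nat \<Rightarrow> nat \<Rightarrow> nat" where
  "comb_par m i = (if (m+1) dvd i then i + (m+1) else i + 1)"

lemma comb_par_gt: "i < comb_par m i"
  unfolding comb_par_def by auto

lemma comb_par_in_nodes: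
  assumes "i \<in> {1..m*(m+1)}" and "i \<noteq> m*(m+1)"
  shows "comb_par m i \<in> {1..m*(m+1)}"
proof (cases "(m+1) dvd i")
  case True
  then obtain q where q: "i = (m+1)*q" by auto
  have "(m+1)*q < (m+1)*m" using assms q by (simp add: mult.commute)
  then have "q < m" by (metis mult_less_cancel1)
  then have "(m+1)*(q+1) \<le> (m+1)*m" by (intro mult_le_mono2) simp
  then show ?thesis using True q assms unfolding comb_par_def by (simp add: algebra_simps)
next
  case False
  then show ?thesis using assms unfolding comb_par_def by auto
qed

(* Since parents have larger numbers, iterating the parent map climbs to the root. *)
lemma comb_in_tree:
  assumes "m \<ge> 1"
  shows "in_tree (m*(m+1)) (m*(m+1)) (comb_par m)"
proof -
  let ?n = "m*(m+1)"
  have reaches_root: "\<exists>k. (comb_par m ^^ k) i = ?n" if "i \<in> {1..?n}" for i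
    using that
  proof (induction "?n - i" arbitrary: i rule: less_induct)
    case less
    show ?case
    proof (cases "i = ?n")
      case False
      have parent: "comb_par m i \<in> {1..?n}" using comb_par_in_nodes[OF less.prems False] .
      then have "?n - comb_par m i < ?n - i" using comb_par_gt[of i m] by auto
      then obtain k where "(comb_par m ^^ k) (comb_par m i) = ?n" using less.hyps parent by blast
      then have "(comb_par m ^^ Suc k) i = ?n" by (simp only: funpow_Suc_right comp_def)
      then show ?thesis by blast
    qed (intro exI[of _ 0], simp)
  qed
  show ?thesis unfolding in_tree_def
    using assms comb_par_in_nodes reaches_root by auto
qed

(* At every position at most three comb edges cross: the two chain edges at k - 1 and
   k, and the spine edge leaving the block in which k - 2 lies. *)
lemma comb_crossing_edges:
  "card {i\<in>{1..m*(m+1)}. i \<le> k \<and> k \<le> (if i = m*(m+1) then m*(m+1) else comb_par m i)} \<le> 3"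
proof -
  let ?crossing = "{i\<in>{1..m*(m+1)}. i \<le> k \<and> k \<le> (if i = m*(m+1) then m*(m+1) else comb_par m i)}"
  have "?crossing \<subseteq> {k - 1, k, (m+1) * ((k - 2) div (m+1))}"
  proof
    fix i assume "i \<in> ?crossing"
    then have below: "i \<le> k" and above: "i \<noteq> m*(m+1) \<Longrightarrow> k \<le> comb_par m i"
      and root: "i = m*(m+1) \<Longrightarrow> k \<le> i" by auto
    show "i \<in> {k - 1, k, (m+1) * ((k - 2) div (m+1))}"
    proof (cases "k - 1 \<le> i")
      case True
      then show ?thesis using below by auto
    next
      case False
      then have not_root: "i \<noteq> m*(m+1)" using root below by auto
      then have "k \<le> comb_par m i" by (rule above)
      with False have "(m+1) dvd i" unfolding comb_par_def by (auto split: if_splits)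
      then obtain q where q: "i = (m+1)*q" by auto
      have "k \<le> i + (m+1)" using \<open>k \<le> comb_par m i\<close> \<open>(m+1) dvd i\<close>
        unfolding comb_par_def by simp
      then have "(k - 2) div (m+1) = q"
        using q False by (intro div_nat_eqI) (auto simp: algebra_simps)
      then show ?thesis using q by simp
    qed
  qed
  then have "card ?crossing \<le> card {k - 1, k, (m+1) * ((k - 2) div (m+1))}" by (intro card_mono) auto
  also have "\<dots> \<le> 3" by (simp add: card_insert_if)
  finally show ?thesis .
qed

lemma comb_sequential_peak_memory:
  "peak_memory (m*(m+1)) (m*(m+1)) (comb_par m) pg_w pg_ne pg_f (\<lambda>i. real (i - 1)) \<le> 3"
  unfolding peak_memory_def
proof (rule cSUP_least)
  fix t :: real
  show "mem_at (m*(m+1)) (m*(m+1)) (comb_par m) pg_w pg_ne pg_f (\<lambda>i. real (i - 1)) t \<le> 3"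
  proof (cases "t \<ge> 0")
    case True
    let ?crossing = "{i\<in>{1..m*(m+1)}. i \<le> nat \<lfloor>t\<rfloor> + 1 \<and>
        nat \<lfloor>t\<rfloor> + 1 \<le> (if i = m*(m+1) then m*(m+1) else comb_par m i)}"
    have "card ?crossing \<le> 3" by (rule comb_crossing_edges)
    then have "real (card ?crossing) \<le> 3" by simp
    then show ?thesis using sequential_schedule_memory[OF comb_par_gt True] by (rule order.trans[rotated])
  next
    case False
    then show ?thesis unfolding mem_at_pebble by simp
  qed
qed simp

(* The parallel schedule of the comb uses one processor per block.  Writing a node as
   x + 1, processor x div (m+1) first runs the m tooth nodes of its block at times
   0..m-1, and the spine node of block q runs at time m + q, right after the spine
   node below it. *)
definition comb_slot :: "nat \<Rightarrow> nat \<Rightarrow> nat" where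
  "comb_slot m x = (if x mod (m+1) = m then m + x div (m+1) else x mod (m+1))"

lemma comb_slot_distinct:
  assumes "x div (m+1) = y div (m+1)" and "x \<noteq> y"
  shows "comb_slot m x \<noteq> comb_slot m y"
proof -
  define a b where "a = x mod (m+1)" and "b = y mod (m+1)"
  have "a \<noteq> b" using assms unfolding a_def b_def by (metis div_mult_mod_eq)
  moreover have "a \<le> m" "b \<le> m" unfolding a_def b_def by (simp_all add: less_Suc_eq_le)
  ultimately show ?thesis unfolding comb_slot_def a_def[symmetric] b_def[symmetric] by auto
qed

lemma comb_slot_before_parent:
  assumes "j \<ge> 1"
  shows "comb_slot m (j - 1) < comb_slot m (comb_par m j - 1)"
proof -
  obtain x where x: "j = Suc x" using assms by (cases j) auto
  show ?thesis
  proof (cases "x mod (m+1) = m")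
    case True
    then have "(m+1) dvd j" using x by (simp add: mod_Suc dvd_eq_mod_eq_0)
    then have "comb_par m j - 1 = x + (m+1)" using x unfolding comb_par_def by simp
    moreover have "(x + (m+1)) mod (m+1) = m" using True by (simp only: mod_add_self2)
    moreover have "(x + (m+1)) div (m+1) = x div (m+1) + 1" using div_add_self2[of "m+1" x] by simp
    ultimately show ?thesis using True x unfolding comb_slot_def by simp
  next
    case False
    then have "\<not> (m+1) dvd j" using x by (simp add: mod_Suc dvd_eq_mod_eq_0)
    then have "comb_par m j - 1 = Suc x" using x unfolding comb_par_def by simp
    then show ?thesis using False x unfolding comb_slot_def by (auto simp: mod_Suc)
  qed
qed

lemma comb_slot_less:
  assumes "x < m*(m+1)"
  shows "comb_slot m x < 2*m"
proof -
  define a where "a = x mod (m+1)"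
  have "x div (m+1) < m" using assms by (simp add: less_mult_imp_div_less)
  moreover have "a \<le> m" unfolding a_def by (simp add: less_Suc_eq_le)
  ultimately show ?thesis unfolding comb_slot_def a_def[symmetric] by auto
qed

lemma comb_parallel_schedule_valid:
  "valid_schedule (m*(m+1)) (m*(m+1)) (comb_par m) pg_w m
     (\<lambda>i. (i - 1) div (m+1)) (\<lambda>i. real (comb_slot m (i - 1)))"
proof (rule valid_unit_schedule)
  fix i assume "i \<in> {1..m*(m+1)}"
  then have "i - 1 < m*(m+1)" by auto
  then show "(i - 1) div (m+1) < m" by (simp add: less_mult_imp_div_less)
next
  fix i j assume "i \<in> {1..m*(m+1)}" "j \<in> {1..m*(m+1)}" "i \<noteq> j"
    and "(i - 1) div (m+1) = (j - 1) div (m+1)"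
  then show "comb_slot m (i - 1) \<noteq> comb_slot m (j - 1)" by (intro comb_slot_distinct) auto
next
  fix i j assume "j \<in> children (m*(m+1)) (m*(m+1)) (comb_par m) i"
  then show "comb_slot m (j - 1) < comb_slot m (i - 1)"
    unfolding children_def using comb_slot_before_parent by auto
qed

lemma comb_parallel_makespan:
  assumes "m \<ge> 1"
  shows "makespan (m*(m+1)) pg_w (\<lambda>i. real (comb_slot m (i - 1))) \<le> 2 * real m"
  unfolding makespan_def pg_w_def
proof (rule Max.boundedI)
  show "(\<lambda>i. real (comb_slot m (i - 1)) + 1) ` {1..m*(m+1)} \<noteq> {}" using assms by simp
  fix c assume "c \<in> (\<lambda>i. real (comb_slot m (i - 1)) + 1) ` {1..m*(m+1)}"
  then obtain i where "i \<in> {1..m*(m+1)}" and c: "c = real (comb_slot m (i - 1)) + 1" by auto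
  then have "comb_slot m (i - 1) < 2*m" by (intro comb_slot_less) auto
  then show "c \<le> 2 * real m" unfolding c by linarith
qed simp

(* With m > 6 alpha beta + 3 beta teeth, the comb on m processors separates the two
   objectives: (2 alpha m + 1) * 3 beta < m (m+1). *)
theorem theorem2:
  fixes \<alpha> \<beta> :: real
  assumes "\<alpha> \<ge> 1" and "\<beta> \<ge> 1"
  shows "\<exists>p n r par. p \<ge> 1 \<and> in_tree n r par \<and>
    \<not> (\<exists>proc \<sigma>. valid_schedule n r par pg_w p proc \<sigma> \<and>
          makespan n pg_w \<sigma> \<le> \<alpha> * opt_makespan n r par pg_w p \<and>
          peak_memory n r par pg_w pg_ne pg_f \<sigma> \<le> \<beta> * opt_memory n r par pg_w pg_ne pg_f p)"
proof -
  define m where "m = nat \<lceil>6*\<alpha>*\<beta> + 3*\<beta>\<rceil> + 1"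
  have "m \<ge> 1" and m_large: "6*\<alpha>*\<beta> + 3*\<beta> < real m"
    unfolding m_def using of_nat_ceiling[of "6*\<alpha>*\<beta> + 3*\<beta>"] by auto
  let ?fast = "\<lambda>i. real (comb_slot m (i - 1))" and ?lean = "\<lambda>i. real (i - 1)"
  have "(\<alpha> * makespan (m*(m+1)) pg_w ?fast + 1)
          * (\<beta> * peak_memory (m*(m+1)) (m*(m+1)) (comb_par m) pg_w pg_ne pg_f ?lean)
        \<le> (\<alpha> * (2 * real m) + 1) * (\<beta> * 3)"
    using comb_parallel_makespan[OF \<open>m \<ge> 1\<close>] comb_sequential_peak_memory assms
      makespan_nonneg[OF comb_parallel_schedule_valid] peak_memory_nonneg \<open>m \<ge> 1\<close>
    by (intro mult_mono add_right_mono mult_left_mono) auto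
  also have "\<dots> \<le> (6*\<alpha>*\<beta> + 3*\<beta>) * real m"
    using assms \<open>m \<ge> 1\<close> by (simp add: algebra_simps)
  also have "\<dots> < real (m + 1) * real m"
    using m_large \<open>m \<ge> 1\<close> by (intro mult_strict_right_mono) auto
  also have "\<dots> = real (m*(m+1))" by (simp add: algebra_simps)
  finally have gap: "(\<alpha> * makespan (m*(m+1)) pg_w ?fast + 1)
      * (\<beta> * peak_memory (m*(m+1)) (m*(m+1)) (comb_par m) pg_w pg_ne pg_f ?lean) < real (m*(m+1))" .
  show ?thesis
    using \<open>m \<ge> 1\<close> comb_in_tree[OF \<open>m \<ge> 1\<close>]
      no_simultaneous_approximation[OF comb_in_tree[OF \<open>m \<ge> 1\<close>] _ _ comb_parallel_schedule_valid
        sequential_schedule_valid[OF comb_par_gt \<open>m \<ge> 1\<close>] gap] assms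
    by (intro exI[of _ m] exI[of _ "m*(m+1)"] exI[of _ "m*(m+1)"] exI[of _ "comb_par m"]) auto
qed

end
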